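(* Let $(G,M,\Delta)$ be a Garside structure and $(H,N,\delta)$ a parabolic substructure. Put $\omega=\delta^{-1}\Delta$ and $\Phi(\alpha)=\Delta\alpha\Delta^{-1}$. Let $k\ge0$ be an integer and let $a\in M$ be of the form $a=\omega_1\omega_2\cdots\omega_k c$, where $\omega_i=\Phi^{-i+1}(\omega)$ for $i\in\{1,\dots,k\}$, $c\in M$, $\Phi^{-k}(\omega)\not\le_L c$, and $c$ is $\Phi^{-k}(N)$-reduced. Then $\lg(a)=\lg(c)+k$.
   Context: Let $G$ be a group and $M$ a submonoid with $M\cap M^{-1}=\{1\}$. Define $\alpha\le_L\beta$ iff $\alpha^{-1}\beta\in M$, and $\alpha\le_R\beta$ iff $\beta\alpha^{-1}\in M$. For $a\in M$ let $\mathrm{Div}_L(a)=\{b\in M: b\le_L a\}$, $\mathrm{Div}_R(a)=\{b\in M: b\le_R a\}$; $a$ is balanced if these coincide, and then $\mathrm{Div}(a)$ denotes this set. $M$ is Noetherian if each $a\in M$ admits an $n$ such that $a$ is not a product of more than $n$ non-trivial factors. A Garside structure $(G,M,\Delta)$: $\Delta\in M$ balanced, $M$ Noetherian, $\mathrm{Div}(\Delta)$ finite and generating $M$ as a monoid and $G$ as a group, $(G,\le_L)$ a lattice with meet $\wedge_L$. A parabolic substructure $(H,N,\delta)$: $\delta\in M$ balanced, $H$ (resp. $N$) the subgroup (resp. submonoid) generated by $\mathrm{Div}(\delta)$, and $\mathrm{Div}(\delta)=\mathrm{Div}(\Delta)\cap N$; it is assumed $H\ne\{1\}$. $\lg$ is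 word length on $G$ with respect to $\mathcal S=\mathrm{Div}(\Delta)\setminus\{1\}$. For $j\in\mathbb Z$, an element $c\in M$ is $\Phi^{j}(N)$-reduced if the only $b\in\Phi^{j}(N)$ with $b\le_L c$ is $b=1$ (equivalently $c\wedge_L\Phi^{j}(\delta)=1$). *)

theory Defs
  imports "HOL-Algebra.Algebra"
begin

definition lprod :: "('a,'b) monoid_scheme \<Rightarrow> 'a list \<Rightarrow> 'a" where
  "lprod G xs = foldr (\<lambda>x y. x \<otimes>\<^bsub>G\<^esub> y) xs \<one>\<^bsub>G\<^esub>"

definition monoid_gen :: "('a,'b) monoid_scheme \<Rightarrow> 'a set \<Rightarrow> 'a set" where
  "monoid_gen G S = {lprod G xs | xs. set xs \<subseteq> S}"

definition leL :: "('a,'b) monoid_scheme \<Rightarrow> 'a set \<Rightarrow> 'a \<Rightarrow> 'a \<Rightarrow> bool" where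
  "leL G M \<alpha> \<beta> \<longleftrightarrow> inv\<^bsub>G\<^esub> \<alpha> \<otimes>\<^bsub>G\<^esub> \<beta> \<in> M"

definition leR :: "('a,'b) monoid_scheme \<Rightarrow> 'a set \<Rightarrow> 'a \<Rightarrow> 'a \<Rightarrow> bool" where
  "leR G M \<alpha> \<beta> \<longleftrightarrow> \<beta> \<otimes>\<^bsub>G\<^esub> inv\<^bsub>G\<^esub> \<alpha> \<in> M"

definition DivL :: "('a,'b) monoid_scheme \<Rightarrow> 'a set \<Rightarrow> 'a \<Rightarrow> 'a set" where
  "DivL G M a = {b \<in> M. leL G M b a}"

definition DivR :: "('a,'b) monoid_scheme \<Rightarrow> 'a set \<Rightarrow> 'a \<Rightarrow> 'a set" where
  "DivR G M a = {b \<in> M. leR G M b a}"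

definition balanced :: "('a,'b) monoid_scheme \<Rightarrow> 'a set \<Rightarrow> 'a \<Rightarrow> bool" where
  "balanced G M a \<longleftrightarrow> a \<in> M \<and> DivL G M a = DivR G M a"

text \<open>Div(a) for balanced a (= DivL = DivR)\<close>
definition Div :: "('a,'b) monoid_scheme \<Rightarrow> 'a set \<Rightarrow> 'a \<Rightarrow> 'a set" where
  "Div G M a = DivL G M a"

definition pointed_submonoid :: "('a,'b) monoid_scheme \<Rightarrow> 'a set \<Rightarrow> bool" where
  "pointed_submonoid G M \<longleftrightarrow> group G \<and> M \<subseteq> carrier G \<and> \<one>\<^bsub>G\<^esub> \<in> M
     \<and> (\<forall>x\<in>M. \<forall>y\<in>M. x \<otimes>\<^bsub>G\<^esub> y \<in> M)
     \<and> M \<inter> (\<lambda>x. inv\<^bsub>G\<^esub> x) ` M = {\<one>\<^bsub>G\<^esub>}"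

definition noetherian :: "('a,'b) monoid_scheme \<Rightarrow> 'a set \<Rightarrow> bool" where
  "noetherian G M \<longleftrightarrow> (\<forall>a\<in>M. \<exists>n::nat. \<forall>xs. set xs \<subseteq> M - {\<one>\<^bsub>G\<^esub>} \<and> lprod G xs = a
       \<longrightarrow> length xs \<le> n)"

definition leL_lattice :: "('a,'b) monoid_scheme \<Rightarrow> 'a set \<Rightarrow> bool" where
  "leL_lattice G M \<longleftrightarrow> (\<forall>x\<in>carrier G. \<forall>y\<in>carrier G.
      (\<exists>m\<in>carrier G. leL G M m x \<and> leL G M m y \<and>
          (\<forall>z\<in>carrier G. leL G M z x \<and> leL G M z y \<longrightarrow> leL G M z m)) \<and>
      (\<exists>j\<in>carrier G. leL G M x j \<and> leL G M y j \<and>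
          (\<forall>z\<in>carrier G. leL G M x z \<and> leL G M y z \<longrightarrow> leL G M j z)))"

definition garside :: "('a,'b) monoid_scheme \<Rightarrow> 'a set \<Rightarrow> 'a \<Rightarrow> bool" where
  "garside G M \<Delta> \<longleftrightarrow> pointed_submonoid G M \<and> balanced G M \<Delta> \<and> noetherian G M
     \<and> finite (Div G M \<Delta>) \<and> monoid_gen G (Div G M \<Delta>) = M
     \<and> generate G (Div G M \<Delta>) = carrier G \<and> leL_lattice G M"

text \<open>parabolic substructure (H,N,\<delta>) with H \<noteq> {1}; H, N are determined by \<delta>\<close>
definition parabolic :: "('a,'b) monoid_scheme \<Rightarrow> 'a set \<Rightarrow> 'a \<Rightarrow> 'a \<Rightarrow> bool" where
  "parabolic G M \<Delta> \<delta> \<longleftrightarrow> balanced G M \<delta>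
     \<and> Div G M \<delta> = Div G M \<Delta> \<inter> monoid_gen G (Div G M \<delta>)
     \<and> generate G (Div G M \<delta>) \<noteq> {\<one>\<^bsub>G\<^esub>}"

definition parN :: "('a,'b) monoid_scheme \<Rightarrow> 'a set \<Rightarrow> 'a \<Rightarrow> 'a set" where
  "parN G M \<delta> = monoid_gen G (Div G M \<delta>)"

definition Phi :: "('a,'b) monoid_scheme \<Rightarrow> 'a \<Rightarrow> int \<Rightarrow> 'a \<Rightarrow> 'a" where
  "Phi G \<Delta> j \<alpha> = \<Delta> [^]\<^bsub>G\<^esub> j \<otimes>\<^bsub>G\<^esub> \<alpha> \<otimes>\<^bsub>G\<^esub> \<Delta> [^]\<^bsub>G\<^esub> (-j)"

definition reduced :: "('a,'b) monoid_scheme \<Rightarrow> 'a set \<Rightarrow> 'a \<Rightarrow> 'a \<Rightarrow> int \<Rightarrow> 'a \<Rightarrow> bool" where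
  "reduced G M \<Delta> \<delta> j c \<longleftrightarrow>
     (\<forall>b\<in>Phi G \<Delta> j ` parN G M \<delta>. leL G M b c \<longrightarrow> b = \<one>\<^bsub>G\<^esub>)"

definition wlen :: "('a,'b) monoid_scheme \<Rightarrow> 'a set \<Rightarrow> 'a \<Rightarrow> 'a \<Rightarrow> nat" where
  "wlen G M \<Delta> g = (LEAST n. \<exists>xs. length xs = n \<and>
      set xs \<subseteq> (Div G M \<Delta> - {\<one>\<^bsub>G\<^esub>}) \<union> (\<lambda>x. inv\<^bsub>G\<^esub> x) ` (Div G M \<Delta> - {\<one>\<^bsub>G\<^esub>})
      \<and> lprod G xs = g)"

end

theory Submission
  imports Defs
begin

text \<open>For \<open>x \<in> M\<close> the word length is the least \<open>n\<close> with \<open>x \<le>\<^sub>L \<Delta>\<^sup>n\<close>: every letter of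
  \<open>S \<union> S\<inverse>\<close> left-divides \<open>\<Delta>\<close>, and conversely splitting off \<open>x \<and>\<^sub>L \<Delta>\<close> repeatedly writes a
  prefix of \<open>\<Delta>\<^sup>n\<close> as a product of at most \<open>n\<close> simple elements. The element \<open>a\<close> equals
  \<open>twist\<^sup>k(\<Phi>\<^sup>k(c))\<close> with \<open>twist y = \<delta>\<inverse> y \<Delta> = \<omega> \<Phi>\<inverse>(y)\<close>, so it suffices that \<open>twist\<close> raises
  this exponent by exactly one on elements \<open>y\<close> with \<open>y \<and>\<^sub>L \<delta> = 1\<close>. It raises it by at most one
  since \<open>\<omega> \<le>\<^sub>L \<Delta>\<close>. Conversely, \<open>twist y \<le>\<^sub>L \<Delta>\<^sup>m\<^sup>+\<^sup>1\<close> gives \<open>y \<le>\<^sub>L \<delta> \<Delta>\<^sup>m\<close>, and coprimality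
  with \<open>\<delta>\<close> strips the \<open>\<delta>\<close>. The coprimality holds for \<open>\<Phi>\<^sup>k(c)\<close> by reducedness of \<open>c\<close> and is
  preserved by \<open>twist\<close> because \<open>\<delta> \<and>\<^sub>L \<omega> = 1\<close>, which is where \<open>Div(\<delta>) = Div(\<Delta>) \<inter> N\<close>
  enters. The hypothesis \<open>\<not> \<Phi>\<^sup>-\<^sup>k(\<omega>) \<le>\<^sub>L c\<close> is only needed to exclude \<open>\<omega> = 1\<close>.\<close>

context monoid
begin

lemma lprod_Nil [simp]: "lprod G [] = \<one>"
  by (simp add: lprod_def)

lemma lprod_Cons [simp]: "lprod G (x # xs) = x \<otimes> lprod G xs"
  by (simp add: lprod_def)

lemma lprod_closed: "set xs \<subseteq> carrier G \<Longrightarrow> lprod G xs \<in> carrier G"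
  by (induction xs) auto

lemma lprod_append:
  "set xs \<subseteq> carrier G \<Longrightarrow> set ys \<subseteq> carrier G \<Longrightarrow> lprod G (xs @ ys) = lprod G xs \<otimes> lprod G ys"
  by (induction xs) (auto simp: lprod_closed m_assoc)

end

context group
begin

lemma inv_mult_cancel_left [simp]: "x \<in> carrier G \<Longrightarrow> y \<in> carrier G \<Longrightarrow> inv x \<otimes> (x \<otimes> y) = y"
  by (simp add: m_assoc[symmetric])

lemma mult_inv_cancel_left [simp]: "x \<in> carrier G \<Longrightarrow> y \<in> carrier G \<Longrightarrow> x \<otimes> (inv x \<otimes> y) = y"
  by (simp add: m_assoc[symmetric])

end

locale prefix_order = group G for G (structure) +
  fixes M :: "'a set"
  assumes pointed: "pointed_submonoid G M"
begin

abbreviation prefix_le (infix "\<preceq>" 50) where "x \<preceq> y \<equiv> leL G M x y"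

lemma M_subset_carrier: "M \<subseteq> carrier G"
  using pointed by (simp add: pointed_submonoid_def)

lemma M_closed: "x \<in> M \<Longrightarrow> x \<in> carrier G"
  using M_subset_carrier by blast

lemma one_in_M [simp]: "\<one> \<in> M"
  using pointed by (simp add: pointed_submonoid_def)

lemma M_mult_closed: "x \<in> M \<Longrightarrow> y \<in> M \<Longrightarrow> x \<otimes> y \<in> M"
  using pointed by (simp add: pointed_submonoid_def)

lemma M_inv_in_M_eq_one:
  assumes "x \<in> M" "inv x \<in> M"
  shows "x = \<one>"
proof -
  have "M \<inter> (\<lambda>x. inv x) ` M = {\<one>}"
    using pointed by (simp add: pointed_submonoid_def)
  moreover have "inv x \<in> M \<inter> (\<lambda>x. inv x) ` M"
    using assms(2) imageI[OF assms(1)] by (rule IntI)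
  ultimately have "inv x = \<one>"
    by (simp only: singleton_iff)
  then show ?thesis
    using assms(1) M_closed by simp
qed

lemma lprod_in_M: "set xs \<subseteq> M \<Longrightarrow> lprod G xs \<in> M"
  by (induction xs) (auto simp: M_mult_closed)

lemma monoid_gen_subset_M: "S \<subseteq> M \<Longrightarrow> monoid_gen G S \<subseteq> M"
  unfolding monoid_gen_def using lprod_in_M by blast

lemma leL_refl: "x \<in> carrier G \<Longrightarrow> x \<preceq> x"
  by (simp add: leL_def)

lemma leL_trans:
  assumes "x \<in> carrier G" "y \<in> carrier G" "z \<in> carrier G" "x \<preceq> y" "y \<preceq> z"
  shows "x \<preceq> z"
proof -
  have "inv x \<otimes> z = (inv x \<otimes> y) \<otimes> (inv y \<otimes> z)"
    using assms by (simp add: m_assoc)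
  then show ?thesis
    using assms M_mult_closed by (simp add: leL_def)
qed

lemma leL_mult_left_iff:
  assumes "x \<in> carrier G" "y \<in> carrier G" "z \<in> carrier G"
  shows "z \<otimes> x \<preceq> z \<otimes> y \<longleftrightarrow> x \<preceq> y"
proof -
  have "inv (z \<otimes> x) \<otimes> (z \<otimes> y) = inv x \<otimes> y"
    using assms by (simp add: inv_mult_group m_assoc)
  then show ?thesis
    by (simp add: leL_def)
qed

lemma one_leL_iff: "x \<in> carrier G \<Longrightarrow> \<one> \<preceq> x \<longleftrightarrow> x \<in> M"
  by (simp add: leL_def)

lemma leL_mult_right_M: "x \<in> carrier G \<Longrightarrow> y \<in> M \<Longrightarrow> x \<preceq> x \<otimes> y"
  using leL_mult_left_iff[of \<one> y x] by (simp add: one_leL_iff M_closed)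

lemma leL_one_imp_eq_one:
  assumes "x \<in> M" "x \<preceq> \<one>"
  shows "x = \<one>"
proof (rule M_inv_in_M_eq_one)
  show "inv x \<in> M"
    using assms by (simp add: leL_def M_closed)
qed (rule assms(1))

definition left_coprime :: "'a \<Rightarrow> 'a \<Rightarrow> bool" where
  "left_coprime x y \<longleftrightarrow> (\<forall>w\<in>M. w \<preceq> x \<longrightarrow> w \<preceq> y \<longrightarrow> w = \<one>)"

lemma left_coprime_commute: "left_coprime x y \<longleftrightarrow> left_coprime y x"
  unfolding left_coprime_def by blast

lemma left_coprime_leL:
  assumes "left_coprime x y" "v \<preceq> x" "v \<in> carrier G" "x \<in> carrier G"
  shows "left_coprime v y"
  unfolding left_coprime_def
proof (intro ballI impI)
  fix w assume "w \<in> M" "w \<preceq> v" "w \<preceq> y"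
  moreover from this have "w \<preceq> x"
    using assms(2-4) M_closed by (intro leL_trans[of w v x]) simp_all
  ultimately show "w = \<one>"
    using assms(1) by (simp add: left_coprime_def)
qed

end

locale prefix_lattice = prefix_order +
  assumes lattice: "leL_lattice G M"
begin

lemma obtain_meet:
  assumes "x \<in> M" "y \<in> M"
  obtains m where "m \<in> M" "m \<preceq> x" "m \<preceq> y"
    "\<And>z. z \<in> carrier G \<Longrightarrow> z \<preceq> x \<Longrightarrow> z \<preceq> y \<Longrightarrow> z \<preceq> m"
proof -
  have "\<exists>m\<in>carrier G. m \<preceq> x \<and> m \<preceq> y \<and> (\<forall>z\<in>carrier G. z \<preceq> x \<and> z \<preceq> y \<longrightarrow> z \<preceq> m)"
    using lattice assms M_closed unfolding leL_lattice_def by blast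
  then obtain m where m: "m \<in> carrier G" "m \<preceq> x" "m \<preceq> y"
    and greatest: "\<And>z. z \<in> carrier G \<Longrightarrow> z \<preceq> x \<Longrightarrow> z \<preceq> y \<Longrightarrow> z \<preceq> m"
    by blast
  have "m \<in> M"
    using greatest[of \<one>] assms m(1) by (simp add: one_leL_iff M_closed)
  with m greatest show ?thesis
    using that by blast
qed

lemma left_coprime_common_lower_bound:
  assumes "x \<in> M" "y \<in> M" "left_coprime x y"
    and "w \<in> carrier G" "w \<preceq> x" "w \<preceq> y"
  shows "w \<preceq> \<one>"
proof -
  obtain m where "m \<in> M" "m \<preceq> x" "m \<preceq> y"
    and greatest: "\<And>z. z \<in> carrier G \<Longrightarrow> z \<preceq> x \<Longrightarrow> z \<preceq> y \<Longrightarrow> z \<preceq> m"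
    using obtain_meet assms(1,2) by blast
  then have "m = \<one>"
    using assms(3) by (simp add: left_coprime_def)
  then show ?thesis
    using greatest assms(4-6) by simp
qed

end

locale garside_structure = prefix_lattice +
  fixes \<Delta> :: 'a
  assumes Delta_balanced: "balanced G M \<Delta>"
    and Div_Delta_generates: "monoid_gen G (Div G M \<Delta>) = M"
begin

abbreviation \<Phi> where "\<Phi> j x \<equiv> Phi G \<Delta> j x"

lemma Delta_M: "\<Delta> \<in> M"
  using Delta_balanced by (simp add: balanced_def)

lemma Delta_closed [simp]: "\<Delta> \<in> carrier G"
  using Delta_M M_closed by blast

lemma Phi_closed [simp]: "x \<in> carrier G \<Longrightarrow> \<Phi> j x \<in> carrier G"
  by (simp add: Phi_def)

lemma Phi_mult: "x \<in> carrier G \<Longrightarrow> y \<in> carrier G \<Longrightarrow> \<Phi> j (x \<otimes> y) = \<Phi> j x \<otimes> \<Phi> j y"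
  by (simp add: Phi_def m_assoc int_pow_neg)

lemma Phi_inv: "x \<in> carrier G \<Longrightarrow> \<Phi> j (inv x) = inv (\<Phi> j x)"
  by (simp add: Phi_def inv_mult_group m_assoc int_pow_neg)

lemma Phi_Phi: "x \<in> carrier G \<Longrightarrow> \<Phi> i (\<Phi> j x) = \<Phi> (i + j) x"
proof -
  assume "x \<in> carrier G"
  moreover have "\<Delta> [^] (- (i + j)) = \<Delta> [^] (- j) \<otimes> \<Delta> [^] (- i)"
    by (simp add: int_pow_mult[symmetric] add.commute)
  ultimately show ?thesis
    by (simp add: Phi_def int_pow_mult m_assoc)
qed

lemma Phi_zero [simp]: "x \<in> carrier G \<Longrightarrow> \<Phi> 0 x = x"
  by (simp add: Phi_def)

lemma Phi_Phi_neg [simp]: "x \<in> carrier G \<Longrightarrow> \<Phi> (- j) (\<Phi> j x) = x"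
  by (simp add: Phi_Phi)

lemma Phi_one [simp]: "\<Phi> j \<one> = \<one>"
  by (simp add: Phi_def int_pow_mult[symmetric])

lemma Phi_lprod: "set xs \<subseteq> carrier G \<Longrightarrow> \<Phi> j (lprod G xs) = lprod G (map (\<Phi> j) xs)"
  by (induction xs) (auto simp: Phi_mult lprod_closed)

lemma Phi_Delta_pow [simp]: "\<Phi> j (\<Delta> [^] (i::int)) = \<Delta> [^] i"
  by (simp add: Phi_def int_pow_mult[symmetric])

lemma Div_Delta_iff_left: "s \<in> Div G M \<Delta> \<longleftrightarrow> s \<in> M \<and> inv s \<otimes> \<Delta> \<in> M"
  by (simp add: Div_def DivL_def leL_def)

lemma Div_Delta_iff_right: "s \<in> Div G M \<Delta> \<longleftrightarrow> s \<in> M \<and> \<Delta> \<otimes> inv s \<in> M"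
  using Delta_balanced by (simp add: balanced_def Div_def DivR_def leR_def)

lemma left_complement_in_Div:
  assumes "s \<in> Div G M \<Delta>"
  shows "inv s \<otimes> \<Delta> \<in> Div G M \<Delta>"
proof -
  have "s \<in> carrier G"
    using assms by (simp add: Div_Delta_iff_left M_closed)
  then have "\<Delta> \<otimes> inv (inv s \<otimes> \<Delta>) = s"
    by (simp add: inv_mult_group m_assoc[symmetric])
  then show ?thesis
    unfolding Div_Delta_iff_right[of "inv s \<otimes> \<Delta>"] using assms by (simp add: Div_Delta_iff_left)
qed

lemma right_complement_in_Div:
  assumes "s \<in> Div G M \<Delta>"
  shows "\<Delta> \<otimes> inv s \<in> Div G M \<Delta>"
proof -
  have "s \<in> carrier G"
    using assms by (simp add: Div_Delta_iff_left M_closed)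
  then have "inv (\<Delta> \<otimes> inv s) \<otimes> \<Delta> = s"
    by (simp add: inv_mult_group m_assoc)
  then show ?thesis
    unfolding Div_Delta_iff_left[of "\<Delta> \<otimes> inv s"] using assms by (simp add: Div_Delta_iff_right)
qed

text \<open>\<open>\<Phi> 1\<close> and \<open>\<Phi> (-1)\<close> are the squares of the right and the left complement
  \<open>s \<mapsto> \<Delta> s\<inverse>\<close> and \<open>s \<mapsto> s\<inverse> \<Delta>\<close>, which permute \<open>Div(\<Delta>)\<close> because \<open>\<Delta>\<close> is balanced.\<close>

lemma Phi_one_minus_one_Div:
  assumes "s \<in> Div G M \<Delta>" "j = 1 \<or> j = -1"
  shows "\<Phi> j s \<in> Div G M \<Delta>"
proof -
  have s: "s \<in> carrier G"
    using assms by (simp add: Div_Delta_iff_left M_closed)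
  have "\<Phi> 1 s = \<Delta> \<otimes> inv (\<Delta> \<otimes> inv s)" "\<Phi> (-1) s = inv (inv s \<otimes> \<Delta>) \<otimes> \<Delta>"
    using s by (simp_all add: Phi_def inv_mult_group m_assoc int_pow_neg)
  then show ?thesis
    using assms right_complement_in_Div left_complement_in_Div by auto
qed

lemma M_obtain_Div_word:
  assumes "x \<in> M"
  obtains xs where "set xs \<subseteq> Div G M \<Delta>" "lprod G xs = x"
proof -
  have "x \<in> monoid_gen G (Div G M \<Delta>)"
    using assms Div_Delta_generates by simp
  then show ?thesis
    using that by (auto simp: monoid_gen_def)
qed

lemma Div_Delta_subset_M: "Div G M \<Delta> \<subseteq> M"
  by (auto simp: Div_Delta_iff_left)

lemma Div_Delta_subset_carrier: "Div G M \<Delta> \<subseteq> carrier G"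
  using Div_Delta_subset_M M_subset_carrier by blast

lemma Phi_one_minus_one_M:
  assumes "x \<in> M" "j = 1 \<or> j = -1"
  shows "\<Phi> j x \<in> M"
proof -
  obtain xs where xs: "set xs \<subseteq> Div G M \<Delta>" "lprod G xs = x"
    using assms(1) M_obtain_Div_word by blast
  have "set (map (\<Phi> j) xs) \<subseteq> M"
    using xs(1) assms(2) Phi_one_minus_one_Div by (auto simp: Div_Delta_iff_left)
  moreover have "\<Phi> j x = lprod G (map (\<Phi> j) xs)"
    using xs Div_Delta_subset_carrier Phi_lprod by blast
  ultimately show ?thesis
    by (simp add: lprod_in_M)
qed

lemma Phi_M: "x \<in> M \<Longrightarrow> \<Phi> j x \<in> M"
proof (induction j arbitrary: x rule: int_induct[where k = 0])
  case base
  then show ?case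
    by (simp add: M_closed)
next
  case (step1 i)
  have "\<Phi> (i + 1) x = \<Phi> 1 (\<Phi> i x)"
    using step1 M_closed by (simp add: Phi_Phi add.commute)
  then show ?case
    using step1 Phi_one_minus_one_M by simp
next
  case (step2 i)
  have "\<Phi> (i - 1) x = \<Phi> (- 1) (\<Phi> i x)"
    using step2 M_closed by (simp add: Phi_Phi)
  then show ?case
    using step2 Phi_one_minus_one_M by simp
qed

lemma Phi_in_M_iff: "x \<in> carrier G \<Longrightarrow> \<Phi> j x \<in> M \<longleftrightarrow> x \<in> M"
  using Phi_M[of x j] Phi_M[of "\<Phi> j x" "- j"] by auto

lemma Phi_leL_iff: "x \<in> carrier G \<Longrightarrow> y \<in> carrier G \<Longrightarrow> \<Phi> j x \<preceq> \<Phi> j y \<longleftrightarrow> x \<preceq> y"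
  by (simp add: leL_def Phi_inv[symmetric] Phi_mult[symmetric] Phi_in_M_iff)

lemma Delta_pow_M: "\<Delta> [^] (n::nat) \<in> M"
  by (induction n) (simp_all add: M_mult_closed Delta_M)

lemma Phi_Delta_nat_pow [simp]: "\<Phi> j (\<Delta> [^] (n::nat)) = \<Delta> [^] n"
  using Phi_Delta_pow[of j "int n"] by (simp add: int_pow_int)

lemma Phi_neg_nat: "\<Phi> (- int n) x = inv (\<Delta> [^] n) \<otimes> x \<otimes> \<Delta> [^] n"
  by (simp add: Phi_def int_pow_neg_int int_pow_int)

lemma Phi_nat: "\<Phi> (int n) x = \<Delta> [^] n \<otimes> x \<otimes> inv (\<Delta> [^] n)"
  by (simp add: Phi_def int_pow_neg_int int_pow_int)

lemma leL_mult_right_Delta_pow_iff: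
  assumes "x \<in> carrier G" "y \<in> carrier G"
  shows "x \<otimes> \<Delta> [^] (n::nat) \<preceq> y \<otimes> \<Delta> [^] n \<longleftrightarrow> x \<preceq> y"
proof -
  have "inv (x \<otimes> \<Delta> [^] n) \<otimes> (y \<otimes> \<Delta> [^] n) = \<Phi> (- int n) (inv x \<otimes> y)"
    using assms by (simp add: Phi_neg_nat inv_mult_group m_assoc)
  then show ?thesis
    using assms by (simp add: leL_def Phi_in_M_iff)
qed

lemma leL_mult_right_Delta_iff:
  "x \<in> carrier G \<Longrightarrow> y \<in> carrier G \<Longrightarrow> x \<otimes> \<Delta> \<preceq> y \<otimes> \<Delta> \<longleftrightarrow> x \<preceq> y"
  using leL_mult_right_Delta_pow_iff[of x y 1] by simp

lemma mult_leL_Delta_pow_Suc: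
  assumes "s \<in> carrier G" "x \<in> carrier G" "s \<preceq> \<Delta>" "x \<preceq> \<Delta> [^] n"
  shows "s \<otimes> x \<preceq> \<Delta> [^] Suc n"
proof -
  have "s \<otimes> x \<preceq> s \<otimes> \<Delta> [^] n"
    using assms by (simp add: leL_mult_left_iff)
  moreover have "s \<otimes> \<Delta> [^] n \<preceq> \<Delta> \<otimes> \<Delta> [^] n"
    using assms by (simp add: leL_mult_right_Delta_pow_iff)
  ultimately have "s \<otimes> x \<preceq> \<Delta> \<otimes> \<Delta> [^] n"
    by (rule leL_trans[rotated 3]) (use assms in simp_all)
  then show ?thesis
    unfolding nat_pow_Suc2[OF Delta_closed] .
qed

lemma letter_leL_Delta:
  assumes "x \<in> Div G M \<Delta> \<union> (\<lambda>x. inv x) ` Div G M \<Delta>"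
  shows "x \<in> carrier G" "x \<preceq> \<Delta>"
proof -
  obtain s where s: "s \<in> Div G M \<Delta>" "x = s \<or> x = inv s"
    using assms by blast
  then have "s \<in> M" "inv s \<otimes> \<Delta> \<in> M"
    by (simp_all add: Div_Delta_iff_left)
  moreover have "s \<otimes> \<Delta> \<in> M"
    using \<open>s \<in> M\<close> Delta_M M_mult_closed by blast
  ultimately show "x \<in> carrier G" "x \<preceq> \<Delta>"
    using s(2) M_closed by (auto simp: leL_def)
qed

lemma lprod_leL_Delta_pow:
  "set xs \<subseteq> Div G M \<Delta> \<union> (\<lambda>x. inv x) ` Div G M \<Delta> \<Longrightarrow> lprod G xs \<preceq> \<Delta> [^] length xs"
proof (induction xs)
  case Nil
  then show ?case
    by (simp add: leL_refl)
next
  case (Cons x xs)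
  have x: "x \<in> carrier G" "x \<preceq> \<Delta>"
    using Cons.prems(1) letter_leL_Delta by simp_all
  have "set xs \<subseteq> carrier G"
    using Cons.prems Div_Delta_subset_carrier by auto
  then have "x \<otimes> lprod G xs \<preceq> \<Delta> [^] Suc (length xs)"
    using Cons x by (intro mult_leL_Delta_pow_Suc) (simp_all add: lprod_closed)
  then show ?case
    by simp
qed

lemma leL_Delta_pow_if_coprime:
  assumes "y \<in> M" "t \<in> M" "left_coprime t y" "y \<preceq> t \<otimes> \<Delta> [^] (n::nat)"
  shows "y \<preceq> \<Delta> [^] n"
proof -
  define u where "u = y \<otimes> inv (\<Delta> [^] n)"
  have "y \<in> carrier G" "t \<in> carrier G"
    using assms(1,2) by (simp_all add: M_closed)
  then have carrier: "y \<in> carrier G" "t \<in> carrier G" "u \<in> carrier G"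
    by (simp_all add: u_def)
  have y: "y = u \<otimes> \<Delta> [^] n"
    using carrier by (simp add: u_def m_assoc)
  have "u \<preceq> t"
    using assms(4) carrier leL_mult_right_Delta_pow_iff y by simp
  moreover have "u \<otimes> \<Delta> [^] n \<preceq> y \<otimes> \<Delta> [^] n"
    unfolding y[symmetric] by (rule leL_mult_right_M[OF carrier(1) Delta_pow_M])
  then have "u \<preceq> y"
    using carrier by (simp add: leL_mult_right_Delta_pow_iff)
  ultimately have "u \<preceq> \<one>"
    using left_coprime_common_lower_bound[OF assms(2,1,3) carrier(3)] by blast
  then show ?thesis
    using carrier leL_mult_right_Delta_pow_iff[of u \<one> n] y by simp
qed

text \<open>The factor \<open>h\<close> is the left gcd \<open>x \<and>\<^sub>L \<Delta>\<close>, i.e. the head of the left-greedy normal form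
  of \<open>x\<close>; maximality of \<open>h\<close> makes the rest \<open>h\<inverse>x\<close> coprime to the complement \<open>h\<inverse>\<Delta>\<close>.\<close>

lemma leL_Delta_pow_Suc_split:
  assumes "x \<in> M" "x \<preceq> \<Delta> [^] Suc n"
  obtains h where "h \<in> Div G M \<Delta>" "h \<preceq> x" "inv h \<otimes> x \<preceq> \<Delta> [^] n"
proof -
  obtain h where "h \<in> M" "h \<preceq> x" "h \<preceq> \<Delta>"
    and greatest: "\<And>z. z \<in> carrier G \<Longrightarrow> z \<preceq> x \<Longrightarrow> z \<preceq> \<Delta> \<Longrightarrow> z \<preceq> h"
    using obtain_meet assms(1) Delta_M by blast
  define x' t where "x' = inv h \<otimes> x" and "t = inv h \<otimes> \<Delta>"
  have h: "h \<in> carrier G" "h \<in> Div G M \<Delta>"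
    using \<open>h \<in> M\<close> \<open>h \<preceq> \<Delta>\<close> by (simp_all add: M_closed Div_Delta_iff_left leL_def)
  have x': "x' \<in> M" "x' \<in> carrier G" "x = h \<otimes> x'"
    using \<open>h \<preceq> x\<close> assms(1) h by (simp_all add: x'_def leL_def M_closed)
  have t: "t \<in> M" "t \<in> carrier G" "\<Delta> = h \<otimes> t"
    using \<open>h \<preceq> \<Delta>\<close> h by (simp_all add: t_def leL_def M_closed)
  have "\<Delta> [^] Suc n = \<Delta> \<otimes> \<Delta> [^] n"
    by (rule nat_pow_Suc2[OF Delta_closed])
  also have "\<dots> = h \<otimes> (t \<otimes> \<Delta> [^] n)"
    using h(1) by (simp add: t_def m_assoc)
  finally have "h \<otimes> x' \<preceq> h \<otimes> (t \<otimes> \<Delta> [^] n)"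
    using assms(2) x'(3) by simp
  then have "x' \<preceq> t \<otimes> \<Delta> [^] n"
    using h x' t by (simp add: leL_mult_left_iff)
  moreover have "left_coprime t x'"
    unfolding left_coprime_def
  proof (intro ballI impI)
    fix w assume "w \<in> M" "w \<preceq> t" "w \<preceq> x'"
    then have "h \<otimes> w \<preceq> h \<otimes> \<one>"
      using greatest[of "h \<otimes> w"] h x' t by (simp add: M_closed leL_mult_left_iff)
    then have "w \<preceq> \<one>"
      using \<open>w \<in> M\<close> h(1) leL_mult_left_iff[of w \<one> h] by (simp add: M_closed)
    with \<open>w \<in> M\<close> show "w = \<one>"
      by (rule leL_one_imp_eq_one)
  qed
  ultimately have "x' \<preceq> \<Delta> [^] n"
    using leL_Delta_pow_if_coprime[OF x'(1) t(1)] by blast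
  with h(2) \<open>h \<preceq> x\<close> show ?thesis
    unfolding x'_def by (rule that)
qed

lemma leL_Delta_pow_imp_Div_word:
  assumes "x \<in> M" "x \<preceq> \<Delta> [^] n"
  shows "\<exists>xs. length xs \<le> n \<and> set xs \<subseteq> Div G M \<Delta> - {\<one>} \<and> lprod G xs = x"
  using assms
proof (induction n arbitrary: x)
  case 0
  then have "x = \<one>"
    by (simp add: leL_one_imp_eq_one)
  then show ?case
    by force
next
  case (Suc n)
  obtain h where h: "h \<in> Div G M \<Delta>" "h \<preceq> x" and rest: "inv h \<otimes> x \<preceq> \<Delta> [^] n"
    using leL_Delta_pow_Suc_split Suc.prems by blast
  have "h \<in> carrier G" "x \<in> carrier G"
    using h Div_Delta_subset_carrier Suc.prems(1) M_closed by auto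
  moreover have "inv h \<otimes> x \<in> M"
    using h(2) by (simp add: leL_def)
  then obtain xs where xs: "length xs \<le> n" "set xs \<subseteq> Div G M \<Delta> - {\<one>}" "lprod G xs = inv h \<otimes> x"
    using Suc.IH rest by blast
  ultimately have x: "x = lprod G (h # xs)"
    by simp
  show ?case
  proof (cases "h = \<one>")
    case True
    with x xs \<open>x \<in> carrier G\<close> show ?thesis
      by (intro exI[of _ xs]) simp
  next
    case False
    with x xs h(1) show ?thesis
      by (intro exI[of _ "h # xs"]) simp
  qed
qed

lemma M_nontrivial_Div_prefix:
  assumes "g \<in> M" "g \<noteq> \<one>"
  shows "\<exists>s \<in> Div G M \<Delta> - {\<one>}. s \<preceq> g"
proof -
  obtain xs where "set xs \<subseteq> Div G M \<Delta>" "lprod G xs = g"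
    using assms(1) M_obtain_Div_word by blast
  then show ?thesis
    using assms(2)
  proof (induction xs arbitrary: g)
    case Nil
    then show ?case
      by simp
  next
    case (Cons x xs)
    have x: "x \<in> Div G M \<Delta>" "x \<in> carrier G" and xs: "set xs \<subseteq> Div G M \<Delta>"
      using Cons.prems(1) Div_Delta_subset_carrier by auto
    then have "lprod G xs \<in> M"
      by (intro lprod_in_M) (auto simp: Div_Delta_iff_left)
    show ?case
    proof (cases "x = \<one>")
      case True
      then show ?thesis
        using Cons.IH[OF xs refl] Cons.prems \<open>lprod G xs \<in> M\<close> M_closed by simp
    next
      case False
      have "x \<preceq> g"
        using leL_mult_right_M[OF x(2) \<open>lprod G xs \<in> M\<close>] Cons.prems(2) by simp
      with False x(1) show ?thesis
        by blast
    qed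
  qed
qed

lemma wlen_le:
  assumes "x \<in> M" "x \<preceq> \<Delta> [^] n"
  shows "wlen G M \<Delta> x \<le> n"
proof -
  obtain xs where xs: "length xs \<le> n" "set xs \<subseteq> Div G M \<Delta> - {\<one>}" "lprod G xs = x"
    using leL_Delta_pow_imp_Div_word assms by blast
  have "wlen G M \<Delta> x \<le> length xs"
    unfolding wlen_def by (rule Least_le, rule exI[of _ xs]) (use xs in auto)
  with xs(1) show ?thesis
    by simp
qed

lemma leL_Delta_pow_wlen:
  assumes "x \<in> M"
  shows "x \<preceq> \<Delta> [^] wlen G M \<Delta> x"
proof -
  obtain xs where "set xs \<subseteq> Div G M \<Delta>" "lprod G xs = x"
    using assms M_obtain_Div_word by blast
  then have "x \<preceq> \<Delta> [^] length xs"
    using lprod_leL_Delta_pow[of xs] by auto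
  then obtain ys where ys: "set ys \<subseteq> Div G M \<Delta> - {\<one>}" "lprod G ys = x"
    using leL_Delta_pow_imp_Div_word assms by blast
  have "\<exists>ws. length ws = wlen G M \<Delta> x
      \<and> set ws \<subseteq> (Div G M \<Delta> - {\<one>}) \<union> (\<lambda>x. inv x) ` (Div G M \<Delta> - {\<one>}) \<and> lprod G ws = x"
    unfolding wlen_def by (rule LeastI[of _ "length ys"], rule exI[of _ ys]) (use ys in auto)
  then obtain ws where "length ws = wlen G M \<Delta> x" "set ws \<subseteq> Div G M \<Delta> \<union> (\<lambda>x. inv x) ` Div G M \<Delta>"
    "lprod G ws = x"
    by auto
  then show ?thesis
    using lprod_leL_Delta_pow by metis
qed

lemma wlen_Phi:
  assumes "x \<in> M"
  shows "wlen G M \<Delta> (\<Phi> j x) = wlen G M \<Delta> x"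
proof -
  have Phi_leL_Delta_pow_iff: "\<Phi> j x \<preceq> \<Delta> [^] n \<longleftrightarrow> x \<preceq> \<Delta> [^] n" for n :: nat
    using Phi_leL_iff[of x "\<Delta> [^] n" j] assms M_closed by simp
  have "\<Phi> j x \<in> M"
    using assms by (rule Phi_M)
  have "wlen G M \<Delta> (\<Phi> j x) \<le> wlen G M \<Delta> x"
    using leL_Delta_pow_wlen[OF assms]
    by (intro wlen_le[OF \<open>\<Phi> j x \<in> M\<close>]) (simp add: Phi_leL_Delta_pow_iff)
  moreover have "wlen G M \<Delta> x \<le> wlen G M \<Delta> (\<Phi> j x)"
    using leL_Delta_pow_wlen[OF \<open>\<Phi> j x \<in> M\<close>]
    by (intro wlen_le[OF assms]) (simp add: Phi_leL_Delta_pow_iff)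
  ultimately show ?thesis
    by (rule antisym)
qed

end

locale parabolic_structure = garside_structure +
  fixes \<delta> :: 'a
  assumes delta_M: "\<delta> \<in> M"
    and Div_delta_eq: "Div G M \<delta> = Div G M \<Delta> \<inter> parN G M \<delta>"
begin

abbreviation N where "N \<equiv> parN G M \<delta>"

abbreviation \<omega> where "\<omega> \<equiv> inv \<delta> \<otimes> \<Delta>"

lemma delta_closed [simp]: "\<delta> \<in> carrier G"
  using delta_M M_closed by blast

lemma Div_delta_iff: "s \<in> Div G M \<delta> \<longleftrightarrow> s \<in> M \<and> s \<preceq> \<delta>"
  by (simp add: Div_def DivL_def)

lemma delta_Div_Delta: "\<delta> \<in> Div G M \<Delta>"
proof -
  have "\<delta> \<in> Div G M \<delta>"
    using delta_M leL_refl by (simp add: Div_delta_iff)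
  then show ?thesis
    using Div_delta_eq by (metis IntD1)
qed

lemma omega_M: "\<omega> \<in> M"
  using delta_Div_Delta by (simp add: Div_Delta_iff_left)

lemma omega_leL_Delta: "\<omega> \<preceq> \<Delta>"
  using left_complement_in_Div[OF delta_Div_Delta] by (simp add: Div_Delta_iff_left leL_def)

lemma leL_delta_in_N: "x \<in> M \<Longrightarrow> x \<preceq> \<delta> \<Longrightarrow> x \<in> N"
  unfolding parN_def monoid_gen_def
  by (intro CollectI exI[of _ "[x]"]) (simp add: Div_delta_iff M_closed)

lemma N_mult_closed:
  assumes "x \<in> N" "y \<in> N"
  shows "x \<otimes> y \<in> N"
proof -
  obtain xs ys where "set xs \<subseteq> Div G M \<delta>" "x = lprod G xs" "set ys \<subseteq> Div G M \<delta>" "y = lprod G ys"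
    using assms by (auto simp: parN_def monoid_gen_def)
  moreover have "Div G M \<delta> \<subseteq> carrier G"
    by (auto simp: Div_delta_iff M_closed)
  ultimately show ?thesis
    unfolding parN_def monoid_gen_def
    by (intro CollectI exI[of _ "xs @ ys"]) (auto simp: lprod_append)
qed

lemma N_subset_M: "N \<subseteq> M"
  unfolding parN_def by (rule monoid_gen_subset_M) (auto simp: Div_delta_iff)

lemma N_leL_Delta_imp_leL_delta:
  assumes "x \<in> N" "x \<preceq> \<Delta>"
  shows "x \<preceq> \<delta>"
proof -
  have "x \<in> Div G M \<Delta> \<inter> N"
    using assms N_subset_M by (auto simp: Div_def DivL_def)
  then have "x \<in> Div G M \<delta>"
    by (simp only: Div_delta_eq)
  then show ?thesis
    by (simp add: Div_delta_iff)
qed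

lemma left_coprime_delta_omega: "left_coprime \<delta> \<omega>"
  unfolding left_coprime_def
proof (intro ballI impI)
  fix v assume v: "v \<in> M" "v \<preceq> \<delta>" "v \<preceq> \<omega>"
  have "\<delta> \<in> N" "v \<in> N"
    using leL_delta_in_N[OF delta_M leL_refl[OF delta_closed]] leL_delta_in_N[OF v(1,2)] .
  then have "\<delta> \<otimes> v \<in> N"
    by (rule N_mult_closed)
  moreover have "\<delta> \<otimes> v \<preceq> \<delta> \<otimes> \<omega>"
    using v M_closed leL_mult_left_iff[of v \<omega> \<delta>] by simp
  ultimately have "\<delta> \<otimes> v \<preceq> \<delta> \<otimes> \<one>"
    using N_leL_Delta_imp_leL_delta by simp
  then have "v \<preceq> \<one>"
    using v M_closed leL_mult_left_iff[of v \<one> \<delta>] by simp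
  with v(1) show "v = \<one>"
    by (rule leL_one_imp_eq_one)
qed

text \<open>A prefix of \<open>\<delta>\<^sup>2\<close> that is left coprime to \<open>\<delta>\<close> is trivial: its first simple factor \<open>s\<close>
  would give \<open>\<delta>\<inverse>s\<close> as a common prefix of \<open>\<delta>\<close> and \<open>\<omega>\<close>.\<close>

lemma leL_delta_square_coprime_eq_one:
  assumes "g \<in> M" "g \<preceq> \<delta> \<otimes> \<delta>" "left_coprime g \<delta>"
  shows "g = \<one>"
proof (rule ccontr)
  assume "g \<noteq> \<one>"
  then obtain s where s: "s \<in> Div G M \<Delta>" "s \<noteq> \<one>" "s \<preceq> g"
    using M_nontrivial_Div_prefix assms(1) by blast
  have "s \<in> M" "s \<in> carrier G" "g \<in> carrier G"
    using s(1) assms(1) Div_Delta_subset_M M_closed by auto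
  have "s \<preceq> \<delta> \<otimes> \<delta>"
    using \<open>s \<in> carrier G\<close> \<open>g \<in> carrier G\<close> by (rule leL_trans[OF _ _ _ s(3) assms(2)]) simp
  then have "inv \<delta> \<otimes> s \<preceq> \<delta>"
    using leL_mult_left_iff[of "inv \<delta> \<otimes> s" \<delta> \<delta>] \<open>s \<in> carrier G\<close> by simp
  moreover have "inv \<delta> \<otimes> s \<preceq> \<omega>"
    using s(1) leL_mult_left_iff[of "inv \<delta> \<otimes> s" \<omega> \<delta>] \<open>s \<in> carrier G\<close>
    by (simp add: Div_Delta_iff_left leL_def)
  ultimately have "inv \<delta> \<otimes> s \<preceq> \<one>"
    using left_coprime_common_lower_bound[OF delta_M omega_M left_coprime_delta_omega]
      \<open>s \<in> carrier G\<close> by simp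
  then have "s \<preceq> \<delta>"
    using leL_mult_left_iff[of "inv \<delta> \<otimes> s" \<one> \<delta>] \<open>s \<in> carrier G\<close> by simp
  then show False
    using assms(3) s \<open>s \<in> M\<close> by (simp add: left_coprime_def)
qed

definition twist :: "'a \<Rightarrow> 'a" where
  "twist y = inv \<delta> \<otimes> y \<otimes> \<Delta>"

lemma twist_closed: "y \<in> carrier G \<Longrightarrow> twist y \<in> carrier G"
  by (simp add: twist_def)

lemma twist_eq: "y \<in> carrier G \<Longrightarrow> twist y = \<omega> \<otimes> \<Phi> (-1) y"
  by (simp add: twist_def Phi_def int_pow_neg m_assoc)

lemma twist_M: "y \<in> M \<Longrightarrow> twist y \<in> M"
  using twist_eq omega_M Phi_M M_mult_closed M_closed by simp

lemma left_coprime_twist: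
  assumes "y \<in> M" "left_coprime y \<delta>"
  shows "left_coprime (twist y) \<delta>"
  unfolding left_coprime_def
proof (intro ballI impI)
  fix w assume w: "w \<in> M" "w \<preceq> twist y" "w \<preceq> \<delta>"
  define z where "z = \<delta> \<otimes> w"
  have carrier: "y \<in> carrier G" "w \<in> carrier G" "z \<in> carrier G"
    using assms(1) w(1) M_closed by (simp_all add: z_def)
  have "z \<in> M"
    using delta_M w(1) by (simp add: z_def M_mult_closed)
  have "z \<in> N"
    unfolding z_def
    using leL_delta_in_N[OF delta_M leL_refl[OF delta_closed]] leL_delta_in_N[OF w(1,3)]
    by (rule N_mult_closed)
  have "z \<preceq> \<delta> \<otimes> twist y"
    using w(2) carrier by (simp add: z_def leL_mult_left_iff twist_closed)
  then have z_le: "z \<preceq> y \<otimes> \<Delta> [^] (1::nat)"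
    using carrier by (simp add: twist_def m_assoc)
  have "z \<preceq> \<delta> \<otimes> \<delta>"
    using w(3) carrier by (simp add: z_def leL_mult_left_iff)
  have "left_coprime y z"
    unfolding left_coprime_def
  proof (intro ballI impI)
    fix v assume v: "v \<in> M" "v \<preceq> y" "v \<preceq> z"
    have "v \<preceq> \<delta> \<otimes> \<delta>"
      using M_closed[OF v(1)] carrier(3) by (rule leL_trans[OF _ _ _ v(3) \<open>z \<preceq> \<delta> \<otimes> \<delta>\<close>]) simp
    moreover have "left_coprime v \<delta>"
      by (rule left_coprime_leL[OF assms(2) v(2)]) (use carrier v M_closed in simp_all)
    ultimately show "v = \<one>"
      by (intro leL_delta_square_coprime_eq_one[OF v(1)])
  qed
  then have "z \<preceq> \<Delta>"
    using leL_Delta_pow_if_coprime[OF \<open>z \<in> M\<close> assms(1) _ z_le] by simp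
  then have "\<delta> \<otimes> w \<preceq> \<delta> \<otimes> \<one>"
    using N_leL_Delta_imp_leL_delta \<open>z \<in> N\<close> by (simp add: z_def)
  then show "w = \<one>"
    using carrier w(1) leL_one_imp_eq_one leL_mult_left_iff[of w \<one> \<delta>] by simp
qed

lemma twist_pow_closed: "y \<in> carrier G \<Longrightarrow> (twist ^^ j) y \<in> carrier G"
  by (induction j) (simp_all add: twist_closed)

lemma twist_pow_M: "y \<in> M \<Longrightarrow> (twist ^^ j) y \<in> M"
  by (induction j) (simp_all add: twist_M)

lemma twist_pow_eq: "y \<in> carrier G \<Longrightarrow> (twist ^^ j) y = inv (\<delta> [^] j) \<otimes> y \<otimes> \<Delta> [^] j"
  by (induction j) (simp_all add: twist_def inv_mult_group m_assoc)

lemma twist_leL_Delta_pow_Suc: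
  assumes "y \<in> carrier G" "y \<preceq> \<Delta> [^] n"
  shows "twist y \<preceq> \<Delta> [^] Suc n"
proof -
  have "\<Phi> (-1) y \<preceq> \<Delta> [^] n"
    using Phi_leL_iff[of y "\<Delta> [^] n" "-1"] assms by simp
  then show ?thesis
    unfolding twist_eq[OF assms(1)]
    by (intro mult_leL_Delta_pow_Suc) (simp_all add: assms(1) omega_leL_Delta)
qed

lemma twist_pow_leL_Delta_pow:
  assumes "y \<in> carrier G" "y \<preceq> \<Delta> [^] n"
  shows "(twist ^^ j) y \<preceq> \<Delta> [^] (n + j)"
proof (induction j)
  case 0
  then show ?case
    using assms by simp
next
  case (Suc j)
  then show ?case
    using twist_leL_Delta_pow_Suc[OF twist_pow_closed[OF assms(1)]] by simp
qed

lemma twist_leL_Delta_pow_cases: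
  assumes "y \<in> M" "left_coprime y \<delta>" "\<omega> \<noteq> \<one>" "twist y \<preceq> \<Delta> [^] n"
  obtains m where "n = Suc m" "y \<preceq> \<Delta> [^] m"
proof (cases n)
  case 0
  have y: "y \<in> carrier G"
    using assms(1) by (rule M_closed)
  have "twist y = \<one>"
    using assms(4) 0 twist_M[OF assms(1)] leL_one_imp_eq_one by simp
  moreover have "\<omega> \<preceq> twist y"
    using leL_mult_right_M[OF _ Phi_M[OF assms(1)]] y by (simp add: twist_eq)
  ultimately have "\<omega> = \<one>"
    using omega_M leL_one_imp_eq_one by simp
  with assms(3) show ?thesis
    by contradiction
next
  case (Suc m)
  have y: "y \<in> carrier G"
    using assms(1) by (rule M_closed)
  have "inv \<delta> \<otimes> y \<otimes> \<Delta> \<preceq> \<Delta> [^] m \<otimes> \<Delta>"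
    using assms(4) Suc by (simp add: twist_def)
  then have "inv \<delta> \<otimes> y \<preceq> \<Delta> [^] m"
    using leL_mult_right_Delta_iff y by simp
  then have "y \<preceq> \<delta> \<otimes> \<Delta> [^] m"
    using leL_mult_left_iff[of "inv \<delta> \<otimes> y" "\<Delta> [^] m" \<delta>] y by (simp add: m_assoc)
  then have "y \<preceq> \<Delta> [^] m"
    using leL_Delta_pow_if_coprime[OF assms(1) delta_M] assms(2) left_coprime_commute by blast
  with Suc show ?thesis
    by (rule that)
qed

lemma twist_pow_leL_Delta_pow_imp:
  assumes "y \<in> M" "left_coprime y \<delta>" "\<omega> \<noteq> \<one>" "(twist ^^ j) y \<preceq> \<Delta> [^] n"
  shows "j \<le> n \<and> y \<preceq> \<Delta> [^] (n - j)"
  using assms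
proof (induction j arbitrary: y)
  case 0
  then show ?case
    by simp
next
  case (Suc j)
  have "(twist ^^ j) (twist y) \<preceq> \<Delta> [^] n"
    using Suc.prems(4) unfolding funpow_Suc_right comp_def .
  then have "j \<le> n \<and> twist y \<preceq> \<Delta> [^] (n - j)"
    by (rule Suc.IH[OF twist_M[OF Suc.prems(1)] left_coprime_twist[OF Suc.prems(1,2)] Suc.prems(3)])
  moreover obtain m where "n - j = Suc m" "y \<preceq> \<Delta> [^] m"
    using twist_leL_Delta_pow_cases[OF Suc.prems(1-3) conjunct2[OF calculation]] .
  moreover have "Suc j \<le> n" "n - Suc j = m"
    using \<open>n - j = Suc m\<close> by simp_all
  ultimately show ?case
    by simp
qed

lemma wlen_twist_pow:
  assumes "y \<in> M" "left_coprime y \<delta>" "\<omega> \<noteq> \<one>"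
  shows "wlen G M \<Delta> ((twist ^^ j) y) = wlen G M \<Delta> y + j"
proof -
  have twisted: "(twist ^^ j) y \<in> M"
    using assms(1) by (rule twist_pow_M)
  have "wlen G M \<Delta> ((twist ^^ j) y) \<le> wlen G M \<Delta> y + j"
    using twisted twist_pow_leL_Delta_pow[OF M_closed[OF assms(1)] leL_Delta_pow_wlen[OF assms(1)]]
    by (rule wlen_le)
  moreover have "j \<le> wlen G M \<Delta> ((twist ^^ j) y)"
    and "y \<preceq> \<Delta> [^] (wlen G M \<Delta> ((twist ^^ j) y) - j)"
    using twist_pow_leL_Delta_pow_imp[OF assms leL_Delta_pow_wlen[OF twisted]] by simp_all
  moreover from this(2) have "wlen G M \<Delta> y \<le> wlen G M \<Delta> ((twist ^^ j) y) - j"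
    by (rule wlen_le[OF assms(1)])
  ultimately show ?thesis
    by linarith
qed

lemma lprod_omega_conjugates:
  "lprod G (map (\<lambda>i. \<Phi> (- int i + 1) \<omega>) [1..<k+1]) = inv (\<delta> [^] k) \<otimes> \<Delta> [^] k"
proof (induction k)
  case 0
  then show ?case
    by simp
next
  case (Suc k)
  have "[1..<Suc k + 1] = [1..<k+1] @ [Suc k]"
    by simp
  moreover have "\<Phi> (- int (Suc k) + 1) \<omega> = inv (\<Delta> [^] k) \<otimes> \<omega> \<otimes> \<Delta> [^] k"
    using Phi_neg_nat[of k \<omega>] by simp
  moreover have "\<delta> [^] k \<otimes> \<delta> = \<delta> \<otimes> \<delta> [^] k" "\<Delta> [^] k \<otimes> \<Delta> = \<Delta> \<otimes> \<Delta> [^] k"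
    using nat_pow_Suc2[of \<delta> k] nat_pow_Suc2[of \<Delta> k] by simp_all
  moreover have "set (map (\<lambda>i. \<Phi> (- int i + 1) \<omega>) [1..<k+1]) \<subseteq> carrier G"
    by auto
  ultimately show ?case
    using Suc by (simp add: lprod_append lprod_closed inv_mult_group m_assoc del: upt_Suc)
qed

lemma lprod_omega_conjugates_mult:
  "c \<in> carrier G \<Longrightarrow>
    lprod G (map (\<lambda>i. \<Phi> (- int i + 1) \<omega>) [1..<k+1]) \<otimes> c = (twist ^^ k) (\<Phi> (int k) c)"
  using lprod_omega_conjugates[of k] by (simp add: twist_pow_eq Phi_nat m_assoc)

lemma reduced_imp_left_coprime:
  assumes "c \<in> carrier G" "reduced G M \<Delta> \<delta> j c"
  shows "left_coprime (\<Phi> (- j) c) \<delta>"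
  unfolding left_coprime_def
proof (intro ballI impI)
  fix w assume w: "w \<in> M" "w \<preceq> \<Phi> (- j) c" "w \<preceq> \<delta>"
  have "\<Phi> j w \<preceq> c"
    using Phi_leL_iff[of w "\<Phi> (- j) c" j] w(2) assms(1) M_closed[OF w(1)] by (simp add: Phi_Phi)
  then have "\<Phi> j w = \<one>"
    using assms(2) leL_delta_in_N[OF w(1,3)] by (simp add: reduced_def)
  then have "\<Phi> (- j) (\<Phi> j w) = \<one>"
    by simp
  then show "w = \<one>"
    using M_closed[OF w(1)] by simp
qed

lemma wlen_omega_conjugates_mult:
  assumes "c \<in> M"
    and "a = lprod G (map (\<lambda>i. \<Phi> (- int i + 1) \<omega>) [1..<k+1]) \<otimes> c"
    and "\<not> \<Phi> (- int k) \<omega> \<preceq> c"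
    and "reduced G M \<Delta> \<delta> (- int k) c"
  shows "wlen G M \<Delta> a = wlen G M \<Delta> c + k"
proof -
  have c: "c \<in> carrier G"
    using assms(1) by (rule M_closed)
  have "\<omega> \<noteq> \<one>"
    using assms(1,3) by (auto simp: one_leL_iff c)
  moreover have "left_coprime (\<Phi> (int k) c) \<delta>"
    using reduced_imp_left_coprime[OF c assms(4)] by simp
  moreover have "a = (twist ^^ k) (\<Phi> (int k) c)"
    using assms(2) lprod_omega_conjugates_mult[OF c] by simp
  ultimately show ?thesis
    using wlen_twist_pow[OF Phi_M[OF assms(1)]] wlen_Phi[OF assms(1)] by simp
qed

end

theorem lemma5p7:
  fixes G :: "('a,'b) monoid_scheme" and M :: "'a set" and \<Delta> \<delta> a c :: 'a and k :: nat
  assumes "garside G M \<Delta>"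
    and "parabolic G M \<Delta> \<delta>"
    and "a \<in> M" and "c \<in> M"
    and "a = lprod G (map (\<lambda>i. Phi G \<Delta> (- int i + 1) (inv\<^bsub>G\<^esub> \<delta> \<otimes>\<^bsub>G\<^esub> \<Delta>)) [1..<k+1])
               \<otimes>\<^bsub>G\<^esub> c"
    and "\<not> leL G M (Phi G \<Delta> (- int k) (inv\<^bsub>G\<^esub> \<delta> \<otimes>\<^bsub>G\<^esub> \<Delta>)) c"
    and "reduced G M \<Delta> \<delta> (- int k) c"
  shows "wlen G M \<Delta> a = wlen G M \<Delta> c + k"
proof -
  have "parabolic_structure G M \<Delta> \<delta>"
  proof (intro parabolic_structure.intro garside_structure.intro prefix_lattice.intro
      prefix_order.intro parabolic_structure_axioms.intro garside_structure_axioms.intro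
      prefix_lattice_axioms.intro prefix_order_axioms.intro)
    show "group G" "pointed_submonoid G M" "leL_lattice G M" "balanced G M \<Delta>"
      "monoid_gen G (Div G M \<Delta>) = M"
      using assms(1) by (simp_all add: garside_def pointed_submonoid_def)
    show "\<delta> \<in> M" "Div G M \<delta> = Div G M \<Delta> \<inter> parN G M \<delta>"
      using assms(2) unfolding parabolic_def balanced_def parN_def by blast+
  qed
  then show ?thesis
    using assms(4-7) by (rule parabolic_structure.wlen_omega_conjugates_mult)
qed

end
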